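(* Let $H$ be a bigraph and $S$ a non-trivial strong component of $H^+$. If both the envelope $\widehat{S}$ and the envelope $\widehat{S'}$ contain a circuit, then $H$ is not an interval bigraph.
   Context: A bigraph is a bipartite graph $H$ with fixed bipartition $(B,W)$ (black/white colours). $H$ is an interval bigraph if there are intervals $I_v$, $v\in V(H)$, with $xy\in E(H)$ iff $I_x\cap I_y\ne\emptyset$ for $x\in B,y\in W$; equivalently (Hell–Huang) $V(H)$ has a linear ordering with no $a<b<c$ where $a,b$ have the same colour, $c$ the opposite colour, $ac\in E(H)$, $bc\notin E(H)$. The pair-digraph $H^+$ has vertices all ordered pairs $(u,v)$ of distinct vertices of $H$, and arcs $(u,v)\to(u',v)$ whenever $u,v$ have the same colour, $uu'\in E(H)$, $vu'\notin E(H)$, and $(u,v)\to(u,v')$ whenever $u,v$ have different colours, $vv'\in E(H)$, $uv\notin E(H)$. For a vertex set $S$ of $H^+$, $S'=\{(x,y):(y,x)\in S\}$. The envelope $\widehat{R}$ of a set $R$ of ordered pairs is the smallest set of ordered pairs containing $R$ that is closed under transitivity (if $(x,y),(y,z)$ are in it then so is $(x,z)$) and under implication (if $(x,y)$ is in it and $(x,y)\to(x',y')$ in $H^+$ then $(x',y')$ is in it). A circuit in a set $R$ of pairs is a sequence $(x_0,x_1),(x_1,x_2),\dots,(x_{n-1},x_n),(x_n,x_0)$ of elements of $R$ with $n\ge1$. *)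

theory Defs
  imports Complex_Main
begin

text \<open>A bigraph H is given by a vertex set V, the set B of black vertices
(the white vertices are V - B), and a symmetric edge relation E of ordered
pairs; every edge joins a black and a white vertex.\<close>

definition bigraph :: "'a set \<Rightarrow> 'a set \<Rightarrow> ('a \<times> 'a) set \<Rightarrow> bool" where
  "bigraph V B E \<longleftrightarrow> finite V \<and> B \<subseteq> V \<and> E \<subseteq> V \<times> V \<and> sym E \<and>
     (\<forall>(x, y) \<in> E. (x \<in> B \<longleftrightarrow> y \<notin> B))"

definition same_colour :: "'a set \<Rightarrow> 'a \<Rightarrow> 'a \<Rightarrow> bool" where
  "same_colour B x y \<longleftrightarrow> (x \<in> B \<longleftrightarrow> y \<in> B)"

definition interval_bigraph :: "'a set \<Rightarrow> 'a set \<Rightarrow> ('a \<times> 'a) set \<Rightarrow> bool" where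
  "interval_bigraph V B E \<longleftrightarrow>
     (\<exists>l r :: 'a \<Rightarrow> real. (\<forall>v\<in>V. l v \<le> r v) \<and>
        (\<forall>x\<in>B. \<forall>y\<in>V - B. ((x, y) \<in> E \<longleftrightarrow> {l x..r x} \<inter> {l y..r y} \<noteq> {})))"

definition pair_vertices :: "'a set \<Rightarrow> ('a \<times> 'a) set" where
  "pair_vertices V = {(u, v). u \<in> V \<and> v \<in> V \<and> u \<noteq> v}"

definition pair_arc :: "'a set \<Rightarrow> 'a set \<Rightarrow> ('a \<times> 'a) set \<Rightarrow> ('a \<times> 'a) \<Rightarrow> ('a \<times> 'a) \<Rightarrow> bool" where
  "pair_arc V B E p q \<longleftrightarrow> p \<in> pair_vertices V \<and> q \<in> pair_vertices V \<and>
     ((\<exists>u v u'. p = (u, v) \<and> q = (u', v) \<and> same_colour B u v \<and>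
               (u, u') \<in> E \<and> (v, u') \<notin> E) \<or>
      (\<exists>u v v'. p = (u, v) \<and> q = (u, v') \<and> \<not> same_colour B u v \<and>
               (v, v') \<in> E \<and> (u, v) \<notin> E))"

definition pair_arcs :: "'a set \<Rightarrow> 'a set \<Rightarrow> ('a \<times> 'a) set \<Rightarrow> (('a \<times> 'a) \<times> ('a \<times> 'a)) set" where
  "pair_arcs V B E = {(p, q). pair_arc V B E p q}"

definition strong_component :: "'a set \<Rightarrow> 'a set \<Rightarrow> ('a \<times> 'a) set \<Rightarrow> ('a \<times> 'a) set \<Rightarrow> bool" where
  "strong_component V B E S \<longleftrightarrow> S \<noteq> {} \<and> S \<subseteq> pair_vertices V \<and>
     (\<forall>p\<in>S. \<forall>q\<in>S. (p, q) \<in> (pair_arcs V B E)\<^sup>*) \<and>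
     (\<forall>p\<in>S. \<forall>q\<in>pair_vertices V.
        (p, q) \<in> (pair_arcs V B E)\<^sup>* \<and> (q, p) \<in> (pair_arcs V B E)\<^sup>* \<longrightarrow> q \<in> S)"

definition nontrivial_strong_component :: "'a set \<Rightarrow> 'a set \<Rightarrow> ('a \<times> 'a) set \<Rightarrow> ('a \<times> 'a) set \<Rightarrow> bool" where
  "nontrivial_strong_component V B E S \<longleftrightarrow> strong_component V B E S \<and> (\<exists>p\<in>S. \<exists>q\<in>S. p \<noteq> q)"

definition reverse_pairs :: "('a \<times> 'a) set \<Rightarrow> ('a \<times> 'a) set" where
  "reverse_pairs S = {(x, y). (y, x) \<in> S}"

inductive_set envelope :: "'a set \<Rightarrow> 'a set \<Rightarrow> ('a \<times> 'a) set \<Rightarrow> ('a \<times> 'a) set \<Rightarrow> ('a \<times> 'a) set"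
  for V B E R where
  base: "p \<in> R \<Longrightarrow> p \<in> envelope V B E R"
| trans: "(x, y) \<in> envelope V B E R \<Longrightarrow> (y, z) \<in> envelope V B E R \<Longrightarrow> (x, z) \<in> envelope V B E R"
| impl: "p \<in> envelope V B E R \<Longrightarrow> pair_arc V B E p q \<Longrightarrow> q \<in> envelope V B E R"

definition has_circuit :: "('a \<times> 'a) set \<Rightarrow> bool" where
  "has_circuit R \<longleftrightarrow> (\<exists>n::nat. \<exists>x::nat \<Rightarrow> 'a. n \<ge> 1 \<and>
     (\<forall>i<n. (x i, x (Suc i)) \<in> R) \<and> (x n, x 0) \<in> R)"

end

theory Submission
  imports Defs
begin

(* Suppose H has an interval representation [l v, r v].  Order the
   vertices by right endpoint, breaking ties by an injective numbering; this is a
   strict linear order < on V.  The set R of pairs (x, y) with x < y is closed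
   under transitivity and under the arcs of H+ (a short interval computation),
   hence it contains the envelope of each of its subsets, and, being a strict
   order, it contains no circuit.  Since R is closed under arcs, a strong
   component S of H+ either lies entirely inside R or is disjoint from it; by
   totality of < the second case means that S' lies inside R.  Either way one of
   the envelopes of S and S' is circuit-free, contradicting the hypothesis. *)

definition arc_closed :: "'a set \<Rightarrow> 'a set \<Rightarrow> ('a \<times> 'a) set \<Rightarrow> ('a \<times> 'a) set \<Rightarrow> bool" where
  "arc_closed V B E R \<longleftrightarrow> (\<forall>p q. p \<in> R \<longrightarrow> pair_arc V B E p q \<longrightarrow> q \<in> R)"

lemma envelope_subset:
  assumes "trans R" and "arc_closed V B E R" and "T \<subseteq> R"
  shows "envelope V B E T \<subseteq> R"
proof
  fix p assume "p \<in> envelope V B E T"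
  then show "p \<in> R"
  proof (induction rule: envelope.induct)
    case (base p) then show ?case using assms(3) by blast
  next
    case (trans x y z) then show ?case using assms(1) by (blast dest: transD)
  next
    case (impl p q) then show ?case using assms(2) unfolding arc_closed_def by blast
  qed
qed

lemma no_circuit_in_strict_order:
  assumes "trans R" and "irrefl R" and "T \<subseteq> R"
  shows "\<not> has_circuit T"
proof
  assume "has_circuit T"
  then obtain m and x :: "nat \<Rightarrow> 'a" where m: "m \<ge> 1"
    and steps: "\<forall>i<m. (x i, x (Suc i)) \<in> R" and closing: "(x m, x 0) \<in> R"
    using assms(3) unfolding has_circuit_def by blast
  have chain: "(x 0, x (Suc i)) \<in> R" if "i < m" for i
    using that
  proof (induction i)
    case 0 then show ?case using steps by simp
  next
    case (Suc i) then show ?case using steps assms(1) by (meson Suc_lessD transD)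
  qed
  have "(x 0, x m) \<in> R" using chain[of "m - 1"] m by simp
  then have "(x 0, x 0) \<in> R" using closing assms(1) by (blast dest: transD)
  then show False using assms(2) unfolding irrefl_def by blast
qed

lemma arc_closed_reach:
  assumes "arc_closed V B E R" and "(p, q) \<in> (pair_arcs V B E)\<^sup>*" and "p \<in> R"
  shows "q \<in> R"
  using assms(2,3)
proof (induction rule: rtrancl_induct)
  case base then show ?case .
next
  case (step y z) then show ?case
    using assms(1) unfolding arc_closed_def pair_arcs_def by blast
qed

lemma strong_component_dichotomy:
  assumes "strong_component V B E S" and "arc_closed V B E R"
    and total: "\<And>x y. (x, y) \<in> pair_vertices V \<Longrightarrow> (x, y) \<in> R \<or> (y, x) \<in> R"
  shows "S \<subseteq> R \<or> reverse_pairs S \<subseteq> R"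
proof -
  have S_vertices: "S \<subseteq> pair_vertices V"
    and conn: "\<forall>p\<in>S. \<forall>q\<in>S. (p, q) \<in> (pair_arcs V B E)\<^sup>*"
    using assms(1) unfolding strong_component_def by auto
  show ?thesis
  proof (cases "S \<inter> R = {}")
    case True
    have "(x, y) \<in> R" if "(x, y) \<in> reverse_pairs S" for x y
    proof -
      have "(y, x) \<in> S" using that unfolding reverse_pairs_def by simp
      then show ?thesis
        using True total[of y x] S_vertices by blast
    qed
    then show ?thesis by auto
  next
    case False
    then obtain p where "p \<in> S" "p \<in> R" by blast
    then have "S \<subseteq> R" using arc_closed_reach[OF assms(2)] conn by blast
    then show ?thesis ..
  qed
qed

lemma closed_intervals_meet:
  fixes a b c d :: "'a::linorder"
  assumes "a \<le> b" and "c \<le> d"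
  shows "{a..b} \<inter> {c..d} \<noteq> {} \<longleftrightarrow> a \<le> d \<and> c \<le> b"
proof
  assume "{a..b} \<inter> {c..d} \<noteq> {}"
  then obtain t where "t \<in> {a..b}" "t \<in> {c..d}" by blast
  then show "a \<le> d \<and> c \<le> b" by (auto intro: order_trans)
next
  assume "a \<le> d \<and> c \<le> b"
  then have "max a c \<in> {a..b} \<inter> {c..d}" using assms by (simp add: max_def)
  then show "{a..b} \<inter> {c..d} \<noteq> {}" by blast
qed

lemma interval_edge_iff:
  fixes l r :: "'a \<Rightarrow> 'b::linorder"
  assumes "sym E"
    and lr: "\<forall>v\<in>V. l v \<le> r v"
    and iv: "\<forall>x\<in>B. \<forall>y\<in>V - B. ((x, y) \<in> E \<longleftrightarrow> {l x..r x} \<inter> {l y..r y} \<noteq> {})"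
    and "x \<in> V" "y \<in> V" "\<not> same_colour B x y"
  shows "(x, y) \<in> E \<longleftrightarrow> (l x \<le> r y \<and> l y \<le> r x)"
proof -
  have meet: "{l a..r a} \<inter> {l b..r b} \<noteq> {} \<longleftrightarrow> l a \<le> r b \<and> l b \<le> r a"
    if "a \<in> V" "b \<in> V" for a b
    by (rule closed_intervals_meet) (use lr that in blast)+
  show ?thesis
  proof (cases "x \<in> B")
    case True
    then have "y \<in> V - B" using assms(5,6) unfolding same_colour_def by auto
    then have "(x, y) \<in> E \<longleftrightarrow> {l x..r x} \<inter> {l y..r y} \<noteq> {}" using iv True by blast
    then show ?thesis using meet[OF assms(4,5)] by simp
  next
    case False
    then have "y \<in> B" "x \<in> V - B" using assms(4,6) unfolding same_colour_def by auto
    then have "(y, x) \<in> E \<longleftrightarrow> {l y..r y} \<inter> {l x..r x} \<noteq> {}" using iv by blast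
    then have "(y, x) \<in> E \<longleftrightarrow> l y \<le> r x \<and> l x \<le> r y" using meet[OF assms(5,4)] by simp
    moreover have "(y, x) \<in> E \<longleftrightarrow> (x, y) \<in> E" using assms(1) unfolding sym_def by blast
    ultimately show ?thesis by auto
  qed
qed

text \<open>The key interval computation: any relation R that is total on distinct
  vertices and only relates x to y when r x \<le> r y is closed under the arcs of H+.
  (An arc (u, v) \<rightarrow> (u', v) means u u' is an edge and v u' is not; since r u \<le> r v,
  the interval of u' would otherwise meet that of v.)\<close>

lemma right_endpoint_order_arc_closed:
  fixes l r :: "'a \<Rightarrow> 'b::linorder"
  assumes opp: "\<forall>(x, y) \<in> E. (x \<in> B \<longleftrightarrow> y \<notin> B)"
    and lr: "\<forall>v\<in>V. l v \<le> r v"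
    and edge: "\<And>x y. x \<in> V \<Longrightarrow> y \<in> V \<Longrightarrow> \<not> same_colour B x y \<Longrightarrow>
                 (x, y) \<in> E \<longleftrightarrow> (l x \<le> r y \<and> l y \<le> r x)"
    and total: "\<And>x y. x \<in> V \<Longrightarrow> y \<in> V \<Longrightarrow> x \<noteq> y \<Longrightarrow> (x, y) \<in> R \<or> (y, x) \<in> R"
    and mono: "\<And>x y. (x, y) \<in> R \<Longrightarrow> r x \<le> r y"
  shows "arc_closed V B E R"
  unfolding arc_closed_def
proof (intro allI impI)
  fix p q assume "p \<in> R" and arc: "pair_arc V B E p q"
  have edge_opp: "\<not> same_colour B x y" if "(x, y) \<in> E" for x y
    using opp that unfolding same_colour_def by auto
  consider (left) u v u' where "p = (u, v)" "q = (u', v)" "same_colour B u v"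
      "(u, u') \<in> E" "(v, u') \<notin> E"
    | (right) u v v' where "p = (u, v)" "q = (u, v')" "\<not> same_colour B u v"
      "(v, v') \<in> E" "(u, v) \<notin> E"
    using arc unfolding pair_arc_def by blast
  then show "q \<in> R"
  proof cases
    case left
    have V: "u \<in> V" "v \<in> V" "u' \<in> V" "u' \<noteq> v"
      using arc left unfolding pair_arc_def pair_vertices_def by auto
    have "r u \<le> r v" using mono \<open>p \<in> R\<close> left(1) by simp
    have opp_u: "\<not> same_colour B u u'" using edge_opp left(4) .
    then have opp_v: "\<not> same_colour B v u'" using left(3) unfolding same_colour_def by auto
    have "l u' \<le> r u" using edge[OF V(1,3) opp_u] left(4) by simp
    moreover have "\<not> (l v \<le> r u' \<and> l u' \<le> r v)" using edge[OF V(2,3) opp_v] left(5) by simp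
    moreover have "l v \<le> r v" using lr V(2) by blast
    ultimately have "r u' < r v" using \<open>r u \<le> r v\<close> by (meson order_trans not_le)
    then have "(u', v) \<in> R" using total[OF V(3,2,4)] mono by force
    then show ?thesis using left(2) by simp
  next
    case right
    have V: "u \<in> V" "v \<in> V" "v' \<in> V" "u \<noteq> v'"
      using arc right unfolding pair_arc_def pair_vertices_def by auto
    have "r u \<le> r v" using mono \<open>p \<in> R\<close> right(1) by simp
    have "l v \<le> r v'" using edge[OF V(2,3) edge_opp[OF right(4)]] right(4) by simp
    moreover have "\<not> (l u \<le> r v \<and> l v \<le> r u)" using edge[OF V(1,2) right(3)] right(5) by simp
    moreover have "l u \<le> r u" using lr V(1) by blast
    ultimately have "r u < r v'" using \<open>r u \<le> r v\<close> by (meson order_trans not_le)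
    then have "(u, v') \<in> R" using total[OF V(1,3,4)] mono by force
    then show ?thesis using right(2) by simp
  qed
qed

definition right_endpoint_order :: "'a set \<Rightarrow> ('a \<Rightarrow> 'b::linorder) \<Rightarrow> ('a \<Rightarrow> nat) \<Rightarrow> ('a \<times> 'a) set" where
  "right_endpoint_order V r f =
     {(x, y). x \<in> V \<and> y \<in> V \<and> (r x < r y \<or> (r x = r y \<and> f x < f y))}"

lemma right_endpoint_order_strict:
  "trans (right_endpoint_order V r f)" "irrefl (right_endpoint_order V r f)"
  unfolding right_endpoint_order_def trans_def irrefl_def by auto

lemma right_endpoint_order_total:
  assumes "inj_on f V" and "x \<in> V" "y \<in> V" "x \<noteq> y"
  shows "(x, y) \<in> right_endpoint_order V r f \<or> (y, x) \<in> right_endpoint_order V r f"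
proof -
  have "f x \<noteq> f y" using assms inj_on_eq_iff[OF assms(1)] by blast
  then show ?thesis using assms(2,3) unfolding right_endpoint_order_def by (auto simp: neq_iff)
qed

lemma right_endpoint_order_mono:
  "(x, y) \<in> right_endpoint_order V r f \<Longrightarrow> r x \<le> r y"
  unfolding right_endpoint_order_def by auto

theorem lemma4p1:
  fixes V B :: "'a set" and E :: "('a \<times> 'a) set" and S :: "('a \<times> 'a) set"
  assumes "bigraph V B E"
    and "nontrivial_strong_component V B E S"
    and "has_circuit (envelope V B E S)"
    and "has_circuit (envelope V B E (reverse_pairs S))"
  shows "\<not> interval_bigraph V B E"
proof
  assume "interval_bigraph V B E"
  then obtain l r :: "'a \<Rightarrow> real" where lr: "\<forall>v\<in>V. l v \<le> r v"
    and iv: "\<forall>x\<in>B. \<forall>y\<in>V - B. ((x, y) \<in> E \<longleftrightarrow> {l x..r x} \<inter> {l y..r y} \<noteq> {})"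
    unfolding interval_bigraph_def by blast
  have bg: "finite V" "sym E" "\<forall>(x, y) \<in> E. (x \<in> B \<longleftrightarrow> y \<notin> B)"
    using assms(1) unfolding bigraph_def by auto
  obtain f :: "'a \<Rightarrow> nat" where f: "inj_on f V"
    using finite_imp_inj_to_nat_seg[OF bg(1)] by blast
  define R where "R = right_endpoint_order V r f"
  have total: "(x, y) \<in> R \<or> (y, x) \<in> R" if "x \<in> V" "y \<in> V" "x \<noteq> y" for x y
    using right_endpoint_order_total[OF f that] unfolding R_def .
  have closed: "arc_closed V B E R"
    using right_endpoint_order_arc_closed[OF bg(3) lr interval_edge_iff[OF bg(2) lr iv]
        total[unfolded R_def] right_endpoint_order_mono[of _ _ V r f]]
    unfolding R_def .
  have sc: "strong_component V B E S"
    using assms(2) unfolding nontrivial_strong_component_def by blast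
  have strict: "trans R" "irrefl R"
    using right_endpoint_order_strict unfolding R_def by blast+
  have circuit_free: "\<not> has_circuit (envelope V B E T)" if "T \<subseteq> R" for T
    using no_circuit_in_strict_order[OF strict envelope_subset[OF strict(1) closed that]] .
  have "S \<subseteq> R \<or> reverse_pairs S \<subseteq> R"
    by (rule strong_component_dichotomy[OF sc closed])
      (use total in \<open>auto simp: pair_vertices_def\<close>)
  then show False using circuit_free assms(3,4) by blast
qed

end
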